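(* Let $P\subset\mathbb{R}^N$ be a polytope with vertex set $\{v_1,\dots,v_M\}$, and let $v:\mathbb{R}^N\to\{v_1,\dots,v_M\}$ assign to each $x$ a vertex of $P$ closest to $x$ in Euclidean norm (with some fixed tie-breaking rule). Let $m\ge 1$, let $(\gamma(k))_{k\ge 1}$ be an arbitrary sequence of points of $P$, and for each $k\ge 0$ let $(w^k_1,\dots,w^k_m)$ be a probability vector ($w^k_i\ge 0$, $\sum_{i=1}^m w^k_i=1$). Let $\varepsilon(1-m),\dots,\varepsilon(0)\in\mathbb{R}^N$ be arbitrary initial values, and for $k\ge 0$ define recursively $$\varepsilon(k+1)=\Big[\sum_{i=1}^m w^k_i\,\varepsilon(k+1-i)\Big]+\gamma(k+1)-V(k+1),$$ where $V(k+1)$ is the vertex of $P$ minimizing $\|\varepsilon(k+1)\|$ with the tie-breaking rule, i.e. $V(k+1)=v\big(\sum_{i=1}^m w^k_i\varepsilon(k+1-i)+\gamma(k+1)\big)$. Then there exists $B>0$ such that $\|\varepsilon(k)\|<B$ for all $k$.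
   Context: This is the "general error diffusion" scheme; $\|\cdot\|$ is the Euclidean norm. *)

theory Defs
  imports "HOL-Analysis.Analysis"
begin

end

(*
  Let V be the vertex set of P and, for W \<subseteq> V, let N(W) be the cone of directions q in
  which every vertex in W maximises <q,-> over V. The error is controlled by the Lyapunov
  function  Phi(e) = max {|pi_N(W) e| + A^|W| | W \<subseteq> V},  where pi_K is the projection onto
  the closed convex cone K and |pi_K e| = max {<e,q> | q \<in> K, |q| \<le> 1}.
  If the new error e = y - v, with v a vertex nearest to y, is large, then Hoffman's error
  bound for polyhedral cones shows that (for A large enough) the maximum defining Phi(e) is
  attained at some W containing v. For the maximising unit vector q \<in> N(W) we have
  <gamma - v, q> \<le> 0 for every gamma \<in> P, so Phi(e) is at most the convex combination of
  the values of Phi at the previous errors. Hence Phi stays bounded, and |e| < Phi(e).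
*)

theory Submission
  imports Defs
begin

definition polar_cone :: "'a::real_inner set \<Rightarrow> 'a set" where
  "polar_cone B = {q. \<forall>b\<in>B. inner q b \<le> 0}"

lemma convex_cone_polar_cone: "convex_cone (polar_cone B)"
  by (auto simp: convex_cone_iff polar_cone_def inner_add_left mult_nonneg_nonpos add_nonpos_nonpos)

lemma convex_polar_cone: "convex (polar_cone B)"
  using convex_cone_polar_cone[of B] by (simp add: convex_cone_def)

lemma closed_polar_cone: "closed (polar_cone B)"
proof -
  have "polar_cone B = (\<Inter>b\<in>B. {q. inner b q \<le> 0})"
    by (auto simp: polar_cone_def inner_commute)
  then show ?thesis
    by (simp add: closed_INT closed_halfspace_le)
qed

lemma polar_cone_empty [simp]: "polar_cone {} = UNIV"
  by (simp add: polar_cone_def)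

lemma closest_point_in_convex_cone:
  fixes K :: "'a::euclidean_space set"
  shows "convex_cone K \<Longrightarrow> closed K \<Longrightarrow> closest_point K x \<in> K"
  by (simp add: closest_point_in_set convex_cone_nonempty)

lemma closest_point_convex_cone_polar:
  fixes K :: "'a::euclidean_space set"
  assumes "convex_cone K" "closed K"
  shows "x - closest_point K x \<in> polar_cone K"
  unfolding polar_cone_def
proof safe
  fix z assume "z \<in> K"
  let ?p = "closest_point K x"
  have "?p \<in> K"
    using assms by (rule closest_point_in_convex_cone)
  then have "?p + z \<in> K"
    using \<open>z \<in> K\<close> assms(1) by (rule convex_cone_add[rotated])
  then have "inner (x - ?p) ((?p + z) - ?p) \<le> 0"
    using assms by (intro closest_point_dot) (auto simp: convex_cone_def)
  then show "inner (x - ?p) z \<le> 0"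
    by simp
qed

lemma closest_point_convex_cone_orthogonal:
  fixes K :: "'a::euclidean_space set"
  assumes "convex_cone K" "closed K"
  shows "inner (x - closest_point K x) (closest_point K x) = 0"
proof -
  let ?p = "closest_point K x"
  have "?p \<in> K"
    using assms by (rule closest_point_in_convex_cone)
  then have "inner (x - ?p) ?p \<le> 0"
    using closest_point_convex_cone_polar[OF assms] by (auto simp: polar_cone_def)
  moreover have "inner (x - ?p) (0 - ?p) \<le> 0"
    using assms by (intro closest_point_dot) (auto simp: convex_cone_def convex_cone_contains_0)
  ultimately show ?thesis
    by simp
qed

lemma norm_closest_point_convex_cone:
  fixes K :: "'a::euclidean_space set"
  assumes "convex_cone K" "closed K"
  shows "(norm (closest_point K x))\<^sup>2 + (norm (x - closest_point K x))\<^sup>2 = (norm x)\<^sup>2"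
proof -
  let ?p = "closest_point K x"
  have "inner x ?p = inner ?p ?p"
    using closest_point_convex_cone_orthogonal[OF assms, of x] by (simp add: inner_diff_left)
  then show ?thesis
    by (simp add: power2_norm_eq_inner inner_diff_left inner_diff_right inner_commute)
qed

lemma norm_closest_point_convex_cone_le:
  fixes K :: "'a::euclidean_space set"
  assumes "convex_cone K" "closed K"
  shows "norm (closest_point K x) \<le> norm x"
proof (rule power2_le_imp_le)
  show "(norm (closest_point K x))\<^sup>2 \<le> (norm x)\<^sup>2"
    using norm_closest_point_convex_cone[OF assms, of x] zero_le_power2[of "norm (x - closest_point K x)"]
    by linarith
qed simp

lemma inner_le_norm_closest_point_convex_cone:
  fixes K :: "'a::euclidean_space set"
  assumes "convex_cone K" "closed K" "q \<in> K" "norm q \<le> 1"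
  shows "inner x q \<le> norm (closest_point K x)"
proof -
  let ?p = "closest_point K x"
  have "inner x q = inner ?p q + inner (x - ?p) q"
    by (simp add: inner_diff_left)
  also have "\<dots> \<le> inner ?p q"
    using closest_point_convex_cone_polar[OF assms(1,2), of x] assms(3)
    by (simp add: polar_cone_def)
  also have "\<dots> \<le> norm ?p * norm q"
    by (rule norm_cauchy_schwarz)
  also have "\<dots> \<le> norm ?p"
    using assms(4) by (simp add: mult_left_le)
  finally show ?thesis .
qed

lemma norm_closest_point_convex_cone_attained:
  fixes K :: "'a::euclidean_space set"
  assumes "convex_cone K" "closed K"
  obtains q where "q \<in> K" "norm q \<le> 1" "inner x q = norm (closest_point K x)"
proof -
  let ?p = "closest_point K x"
  let ?q = "(1 / norm ?p) *\<^sub>R ?p"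
  have "?p \<in> K"
    using assms by (rule closest_point_in_convex_cone)
  then have "?q \<in> K"
    using assms(1) by (simp add: convex_cone_scaleR)
  moreover have "norm ?q \<le> 1"
    by simp
  moreover have "inner x ?p = (norm ?p)\<^sup>2"
    using closest_point_convex_cone_orthogonal[OF assms, of x]
    by (simp add: inner_diff_left power2_norm_eq_inner)
  then have "inner x ?q = norm ?p"
    by (simp add: power2_eq_square)
  ultimately show ?thesis
    using that by blast
qed

text \<open>Moving \<open>p\<close> slightly towards \<open>z\<close> keeps the inactive constraints satisfied, so \<open>p\<close> is
  also the projection onto the larger cone cut out by the active constraints alone.\<close>

lemma closest_point_polar_cone_active:
  fixes B :: "'a::euclidean_space set" and x :: 'a
  assumes "finite B"
  defines "p \<equiv> closest_point (polar_cone B) x"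
  shows "x - p \<in> polar_cone (polar_cone {b\<in>B. inner p b = 0})"
  unfolding polar_cone_def [of "polar_cone _"]
proof safe
  fix z assume z: "z \<in> polar_cone {b\<in>B. inner p b = 0}"
  define J where "J = {b\<in>B. inner p b \<noteq> 0}"
  have "p \<in> polar_cone B"
    unfolding p_def by (intro closest_point_in_convex_cone convex_cone_polar_cone closed_polar_cone)
  then have J_neg: "inner p b < 0" if "b \<in> J" for b
    using that by (force simp: J_def polar_cone_def)
  have "\<forall>b\<in>J. \<forall>\<^sub>F u in at_right 0. inner p b + u * inner (z - p) b < 0"
  proof
    fix b assume "b \<in> J"
    have "((\<lambda>u. inner p b + u * inner (z - p) b) \<longlongrightarrow> inner p b + 0 * inner (z - p) b) (at_right 0)"
      by (intro tendsto_intros)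
    then show "\<forall>\<^sub>F u in at_right 0. inner p b + u * inner (z - p) b < 0"
      using J_neg[OF \<open>b \<in> J\<close>] by (intro order_tendstoD(2)) auto
  qed
  then have "\<forall>\<^sub>F u in at_right 0. 0 < u \<and> (\<forall>b\<in>J. inner p b + u * inner (z - p) b < 0)"
    using assms(1) by (intro eventually_conj eventually_at_right_less eventually_ball_finite) (auto simp: J_def)
  then obtain u where u: "0 < u" "\<forall>b\<in>J. inner p b + u * inner (z - p) b < 0"
    using eventually_happens' trivial_limit_at_right_real by blast
  have "p + u *\<^sub>R (z - p) \<in> polar_cone B"
    unfolding polar_cone_def
  proof safe
    fix b assume "b \<in> B"
    show "inner (p + u *\<^sub>R (z - p)) b \<le> 0"
    proof (cases "b \<in> J")
      case True
      then show ?thesis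
        using u(2) by (simp add: inner_add_left less_imp_le)
    next
      case False
      then have "inner p b = 0" "inner z b \<le> 0"
        using \<open>b \<in> B\<close> z by (auto simp: J_def polar_cone_def)
      then show ?thesis
        using u(1) by (simp add: inner_add_left inner_diff_left mult_nonneg_nonpos)
    qed
  qed
  then have "inner (x - p) ((p + u *\<^sub>R (z - p)) - p) \<le> 0"
    unfolding p_def
    by (intro closest_point_dot convex_polar_cone closed_polar_cone)
  then have "inner (x - p) (z - p) \<le> 0"
    using u(1) by (simp add: mult_le_0_iff)
  moreover have "inner (x - p) p = 0"
    unfolding p_def by (intro closest_point_convex_cone_orthogonal convex_cone_polar_cone closed_polar_cone)
  ultimately show "inner (x - p) z \<le> 0"
    by (simp add: inner_diff_right)
qed

lemma polar_polar_cone_norm_bound: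
  fixes B :: "'a::euclidean_space set"
  assumes "finite B"
  obtains C where "0 < C"
    "\<And>y. y \<in> polar_cone (polar_cone B) \<Longrightarrow> norm y \<le> C * (\<Sum>b\<in>B. max 0 (inner y b))"
proof -
  define g where "g y = (\<Sum>b\<in>B. max 0 (inner y b))" for y :: 'a
  define S where "S = sphere 0 1 \<inter> polar_cone (polar_cone B)"
  have g_nonneg: "0 \<le> g y" for y
    by (simp add: g_def sum_nonneg)
  have g_scale: "g (c *\<^sub>R y) = c * g y" if "0 \<le> c" for c y
    using that by (simp add: g_def sum_distrib_left max_mult_distrib_left)
  \<comment> \<open>A unit vector of the bipolar cone with \<open>g = 0\<close> would lie in the cone and in its polar.\<close>
  have g_pos: "0 < g y" if "y \<in> S" for y
  proof (rule ccontr)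
    assume "\<not> 0 < g y"
    then have "g y = 0"
      using g_nonneg[of y] by simp
    then have "\<forall>b\<in>B. max 0 (inner y b) = 0"
      by (simp add: g_def sum_nonneg_eq_0_iff[OF assms])
    then have "y \<in> polar_cone B"
      by (auto simp: polar_cone_def max_def split: if_splits)
    then have "inner y y \<le> 0"
      using that by (simp add: S_def polar_cone_def)
    then show False
      using that by (simp add: S_def flip: power2_norm_eq_inner)
  qed
  obtain m where m: "0 < m" "\<And>y. y \<in> S \<Longrightarrow> m \<le> g y"
  proof (cases "S = {}")
    case True
    then show ?thesis
      using that[of 1] by simp
  next
    case False
    have "compact S"
      unfolding S_def by (intro compact_Int_closed compact_sphere closed_polar_cone)
    moreover have "continuous_on S g"
      unfolding g_def by (intro continuous_intros)
    ultimately obtain y0 where "y0 \<in> S" "\<And>y. y \<in> S \<Longrightarrow> g y0 \<le> g y"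
      using continuous_attains_inf[OF _ False] by blast
    then show ?thesis
      using that g_pos by blast
  qed
  show ?thesis
  proof (rule that[of "1 / m"])
    fix y assume y: "y \<in> polar_cone (polar_cone B)"
    show "norm y \<le> 1 / m * (\<Sum>b\<in>B. max 0 (inner y b))"
    proof (cases "y = 0")
      case False
      have "(1 / norm y) *\<^sub>R y \<in> polar_cone (polar_cone B)"
        using y by (intro convex_cone_scaleR[OF convex_cone_polar_cone]) simp_all
      then have "(1 / norm y) *\<^sub>R y \<in> S"
        using False by (simp add: S_def)
      then have "m \<le> g ((1 / norm y) *\<^sub>R y)"
        by (rule m(2))
      also have "\<dots> = g y / norm y"
        using g_scale[of "1 / norm y" y] by simp
      finally have "m \<le> g y / norm y" .
      then show ?thesis
        using m(1) False by (simp add: g_def field_simps)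
    qed (simp add: sum_nonneg m(1))
  qed (simp add: m(1))
qed

lemma polar_polar_cone_norm_bound_uniform:
  fixes B0 :: "'a::euclidean_space set"
  assumes "finite B0"
  obtains c where "0 < c"
    "\<And>B y. B \<subseteq> B0 \<Longrightarrow> y \<in> polar_cone (polar_cone B) \<Longrightarrow>
       norm y \<le> c * (\<Sum>b\<in>B. max 0 (inner y b))"
proof -
  have "\<forall>B\<in>Pow B0. \<exists>c>0. \<forall>y\<in>polar_cone (polar_cone B). norm y \<le> c * (\<Sum>b\<in>B. max 0 (inner y b))"
    using polar_polar_cone_norm_bound finite_subset[OF _ assms] by (metis PowD)
  then obtain c where c_pos: "\<And>B. B \<subseteq> B0 \<Longrightarrow> 0 < c B"
    and c: "\<And>B y. B \<subseteq> B0 \<Longrightarrow> y \<in> polar_cone (polar_cone B) \<Longrightarrow>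
              norm y \<le> c B * (\<Sum>b\<in>B. max 0 (inner y b))"
    by (metis PowI bchoice)
  define c0 where "c0 = Max (c ` Pow B0)"
  have c_le: "c B \<le> c0" if "B \<subseteq> B0" for B
    unfolding c0_def using assms that by (intro Max_ge) auto
  show ?thesis
  proof (rule that[of c0])
    show "0 < c0"
      using c_pos[of "{}"] c_le[of "{}"] by simp
    fix B y
    assume "B \<subseteq> B0" "y \<in> polar_cone (polar_cone B)"
    then have "norm y \<le> c B * (\<Sum>b\<in>B. max 0 (inner y b))"
      by (rule c)
    also have "\<dots> \<le> c0 * (\<Sum>b\<in>B. max 0 (inner y b))"
      using c_le[OF \<open>B \<subseteq> B0\<close>] by (intro mult_right_mono sum_nonneg) auto
    finally show "norm y \<le> c0 * (\<Sum>b\<in>B. max 0 (inner y b))" .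
  qed
qed

lemma hoffman_bound:
  fixes B0 :: "'a::euclidean_space set"
  assumes "finite B0"
  obtains C where "0 < C"
    "\<And>B x F. B \<subseteq> B0 \<Longrightarrow> 0 \<le> F \<Longrightarrow> (\<forall>b\<in>B. inner x b \<le> F) \<Longrightarrow>
       norm (x - closest_point (polar_cone B) x) \<le> C * F"
proof -
  obtain c where "0 < c" and c: "\<And>B y. B \<subseteq> B0 \<Longrightarrow> y \<in> polar_cone (polar_cone B) \<Longrightarrow>
      norm y \<le> c * (\<Sum>b\<in>B. max 0 (inner y b))"
    using polar_polar_cone_norm_bound_uniform[OF assms] by blast
  show ?thesis
  proof (rule that[of "c * (real (card B0) + 1)"])
    show "0 < c * (real (card B0) + 1)"
      using \<open>0 < c\<close> by simp
  next
    fix B x F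
    assume B: "B \<subseteq> B0" and F: "0 \<le> F" and x: "\<forall>b\<in>B. inner x b \<le> F"
    define p where "p = closest_point (polar_cone B) x"
    define I where "I = {b\<in>B. inner p b = 0}"
    have I: "I \<subseteq> B0"
      using B by (auto simp: I_def)
    have "norm (x - p) \<le> c * (\<Sum>b\<in>I. max 0 (inner (x - p) b))"
      using closest_point_polar_cone_active[of B x] finite_subset[OF B assms]
      by (intro c I) (simp add: p_def I_def)
    also have "(\<Sum>b\<in>I. max 0 (inner (x - p) b)) = (\<Sum>b\<in>I. max 0 (inner x b))"
      by (simp add: I_def inner_diff_left)
    also have "\<dots> \<le> real (card I) * F"
      using x F by (intro sum_bounded_above) (auto simp: I_def)
    also have "\<dots> \<le> real (card B0) * F"
      using F card_mono[OF assms I] by (simp add: mult_right_mono)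
    finally have "norm (x - p) \<le> c * (real (card B0) * F)"
      using \<open>0 < c\<close> by (simp add: mult_left_mono)
    also have "\<dots> \<le> c * (real (card B0) + 1) * F"
      using \<open>0 < c\<close> F by (simp add: algebra_simps)
    finally show "norm (x - closest_point (polar_cone B) x) \<le> c * (real (card B0) + 1) * F"
      by (simp add: p_def)
  qed
qed

definition normal_cone :: "'a::real_inner set \<Rightarrow> 'a set \<Rightarrow> 'a set" where
  "normal_cone V W = polar_cone {u - w |u w. u \<in> V \<and> w \<in> W}"

lemma mem_normal_cone: "q \<in> normal_cone V W \<longleftrightarrow> (\<forall>u\<in>V. \<forall>w\<in>W. inner q u \<le> inner q w)"
  by (fastforce simp: normal_cone_def polar_cone_def inner_diff_right)

lemma normal_cone_empty [simp]: "normal_cone V {} = UNIV"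
  by (simp add: normal_cone_def)

lemma convex_cone_normal_cone: "convex_cone (normal_cone V W)"
  by (simp add: normal_cone_def convex_cone_polar_cone)

lemma closed_normal_cone: "closed (normal_cone V W)"
  by (simp add: normal_cone_def closed_polar_cone)

lemma hoffman_bound_normal_cone:
  fixes V :: "'a::euclidean_space set"
  assumes "finite V"
  obtains C where "0 < C"
    "\<And>W x F. W \<subseteq> V \<Longrightarrow> 0 \<le> F \<Longrightarrow> (\<forall>u\<in>V. \<forall>w\<in>W. inner x (u - w) \<le> F) \<Longrightarrow>
       norm (x - closest_point (normal_cone V W) x) \<le> C * F"
proof -
  have fin: "finite {u - w |u w. u \<in> V \<and> w \<in> V}"
    using assms by (intro finite_image_set2) auto
  obtain C where "0 < C"
    and C: "\<And>B x F. B \<subseteq> {u - w |u w. u \<in> V \<and> w \<in> V} \<Longrightarrow> 0 \<le> F \<Longrightarrow>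
              (\<forall>b\<in>B. inner x b \<le> F) \<Longrightarrow> norm (x - closest_point (polar_cone B) x) \<le> C * F"
    using hoffman_bound[OF fin] by blast
  show ?thesis
  proof (rule that[OF \<open>0 < C\<close>])
    fix W x F
    assume "W \<subseteq> V" "0 \<le> F" "\<forall>u\<in>V. \<forall>w\<in>W. inner x (u - w) \<le> F"
    then show "norm (x - closest_point (normal_cone V W) x) \<le> C * F"
      unfolding normal_cone_def by (intro C) auto
  qed
qed

lemma nearest_point_inner_le:
  fixes x u v :: "'a::real_inner"
  assumes "norm (x - v) \<le> norm (x - u)"
  shows "inner (x - v) (u - v) \<le> (norm (u - v))\<^sup>2 / 2"
proof -
  have "(norm (x - v))\<^sup>2 \<le> (norm ((x - v) - (u - v)))\<^sup>2"
    using assms by (simp add: power_mono)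
  then show ?thesis
    by (simp add: power2_norm_eq_inner inner_diff_left inner_diff_right inner_commute)
qed

lemma pythagorean_leg_bounds:
  fixes n d E :: real
  assumes "0 \<le> n" "n\<^sup>2 + d\<^sup>2 = E\<^sup>2" "0 < E"
  shows "n \<le> E" "E - d\<^sup>2 / E \<le> n" "n \<le> E - d\<^sup>2 / (2 * E)"
proof -
  have "n\<^sup>2 \<le> E\<^sup>2"
    using assms(2) zero_le_power2[of d] by linarith
  then show "n \<le> E"
    by (rule power2_le_imp_le) (use assms(3) in simp)
  have "E - d\<^sup>2 / E = n\<^sup>2 / E"
    using assms by (simp add: field_simps power2_eq_square)
  also have "\<dots> \<le> n"
    using \<open>n \<le> E\<close> assms by (simp add: divide_le_eq power2_eq_square mult_left_mono)
  finally show "E - d\<^sup>2 / E \<le> n" .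
  have "d\<^sup>2 = (E - n) * (E + n)"
    using assms(2) by (simp add: algebra_simps power2_eq_square)
  also have "\<dots> \<le> (E - n) * (2 * E)"
    using \<open>n \<le> E\<close> by (intro mult_left_mono) simp_all
  finally show "n \<le> E - d\<^sup>2 / (2 * E)"
    using assms(3) by (simp add: field_simps)
qed

text \<open>In the application \<open>n0, n1, n2\<close> are the norms of the projections of a vector of norm
  \<open>E\<close> onto the normal cones of \<open>W\<^sub>0\<close>, \<open>insert v W\<^sub>0\<close> and \<open>{v}\<close>, \<open>s, t, c\<close> the
  corresponding distances, and \<open>a = A ^ card W\<^sub>0\<close>. Either \<open>t\<close> is small, and adding \<open>v\<close> to
  \<open>W\<^sub>0\<close> gains the factor \<open>A\<close> in the weight at a small cost in the norm, or \<open>s\<close> is large,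
  so the projection onto the normal cone of \<open>W\<^sub>0\<close> is short and \<open>{v}\<close> alone does better.\<close>

lemma vertex_singleton_arith:
  fixes C D a E n0 s n2 c :: real
  assumes a: "1 \<le> a" and E: "3 * C\<^sup>2 * D ^ 4 + 3 * D\<^sup>2 + 1 \<le> E"
    and n0: "0 \<le> n0" "n0\<^sup>2 + s\<^sup>2 = E\<^sup>2"
    and n2: "0 \<le> n2" "n2\<^sup>2 + c\<^sup>2 = E\<^sup>2" "0 \<le> c" "c \<le> C * D\<^sup>2"
    and far: "4 * a * E < (s + D)\<^sup>2"
  shows "n0 + a \<le> n2"
proof -
  have "0 \<le> 3 * C\<^sup>2 * D ^ 4 + 3 * D\<^sup>2"
    by simp
  then have E0: "0 < E"
    using E by linarith
  have "(s + D)\<^sup>2 \<le> 3 / 2 * s\<^sup>2 + 3 * D\<^sup>2"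
    using zero_le_power2[of "s - 2 * D"] by (simp add: power2_eq_square algebra_simps)
  moreover have "c\<^sup>2 \<le> (C * D\<^sup>2)\<^sup>2"
    by (rule power_mono[OF n2(4) n2(3)])
  moreover have "(C * D\<^sup>2)\<^sup>2 = C\<^sup>2 * D ^ 4"
    by (simp add: power_mult_distrib flip: power_mult)
  moreover have "E \<le> a * E"
    using a E0 by simp
  ultimately have "2 * c\<^sup>2 + 2 * a * E \<le> s\<^sup>2"
    using far E by linarith
  then have "(2 * c\<^sup>2 + 2 * a * E) / (2 * E) \<le> s\<^sup>2 / (2 * E)"
    using E0 by (intro divide_right_mono) auto
  moreover have "(2 * c\<^sup>2 + 2 * a * E) / (2 * E) = c\<^sup>2 / E + a"
    using E0 by (simp add: field_simps)
  ultimately show ?thesis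
    using pythagorean_leg_bounds(3)[OF n0 E0] pythagorean_leg_bounds(2)[OF n2(1,2) E0] by linarith
qed

lemma vertex_insertion_arith:
  fixes C D A a E n0 s n1 t n2 c :: real
  assumes CD: "0 < C" "0 < D" and A: "1 + 4 * C\<^sup>2 * D\<^sup>2 \<le> A" and a: "1 \<le> a"
    and E: "3 * C\<^sup>2 * D ^ 4 + 3 * D\<^sup>2 + 1 \<le> E"
    and n0: "0 \<le> n0" "n0\<^sup>2 + s\<^sup>2 = E\<^sup>2"
    and n1: "0 \<le> n1" "n1\<^sup>2 + t\<^sup>2 = E\<^sup>2" "0 \<le> t" "t \<le> C * (D * s + D\<^sup>2)"
    and n2: "0 \<le> n2" "n2\<^sup>2 + c\<^sup>2 = E\<^sup>2" "0 \<le> c" "c \<le> C * D\<^sup>2"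
  shows "n0 + a \<le> n1 + a * A \<or> n0 + a \<le> n2 + A"
proof -
  have "0 \<le> 3 * C\<^sup>2 * D ^ 4 + 3 * D\<^sup>2" "0 \<le> 4 * C\<^sup>2 * D\<^sup>2"
    by simp_all
  then have E0: "0 < E" and "0 \<le> A"
    using E A by linarith+
  show ?thesis
  proof (cases "t\<^sup>2 \<le> a * (A - 1) * E")
    case True
    then have "t\<^sup>2 / E \<le> a * (A - 1)"
      using E0 by (simp add: divide_le_eq)
    then show ?thesis
      using pythagorean_leg_bounds(1)[OF n0 E0] pythagorean_leg_bounds(2)[OF n1(1,2) E0]
      by (simp add: algebra_simps)
  next
    case False
    have "C\<^sup>2 * D\<^sup>2 * 4 * (a * E) \<le> (A - 1) * (a * E)"
      using A a E0 by (intro mult_right_mono) auto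
    then have "C\<^sup>2 * D\<^sup>2 * (4 * a * E) < t\<^sup>2"
      using False by (simp add: algebra_simps)
    also have "\<dots> \<le> (C * (D * s + D\<^sup>2))\<^sup>2"
      using n1(3,4) by (rule power_mono[rotated])
    also have "\<dots> = C\<^sup>2 * D\<^sup>2 * (s + D)\<^sup>2"
      by (simp add: power2_eq_square algebra_simps)
    finally have "4 * a * E < (s + D)\<^sup>2"
      using CD by simp
    then have "n0 + a \<le> n2"
      by (rule vertex_singleton_arith[OF a E n0 n2])
    then show ?thesis
      using \<open>0 \<le> A\<close> by linarith
  qed
qed

locale vertex_potential =
  fixes V :: "'a::euclidean_space set" and C D A :: real
  assumes finite_V: "finite V"
    and C_pos: "0 < C"
    and hoffman: "\<And>W x F. W \<subseteq> V \<Longrightarrow> 0 \<le> F \<Longrightarrow> (\<forall>u\<in>V. \<forall>w\<in>W. inner x (u - w) \<le> F) \<Longrightarrow>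
                    norm (x - closest_point (normal_cone V W) x) \<le> C * F"
    and D_pos: "0 < D"
    and norm_diff_le_D: "\<And>u w. u \<in> V \<Longrightarrow> w \<in> V \<Longrightarrow> norm (u - w) \<le> D"
    and A_large: "1 + 4 * C\<^sup>2 * D\<^sup>2 \<le> A"
begin

lemma A_ge_1: "1 \<le> A"
proof -
  have "0 \<le> 4 * C\<^sup>2 * D\<^sup>2"
    by simp
  then show ?thesis
    using A_large by linarith
qed

definition potential :: "'a set \<Rightarrow> 'a \<Rightarrow> real" where
  "potential W e = norm (closest_point (normal_cone V W) e) + A ^ card W"

definition lyapunov :: "'a \<Rightarrow> real" where
  "lyapunov e = Max ((\<lambda>W. potential W e) ` Pow V)"

definition critical_radius :: real where
  "critical_radius = 3 * C\<^sup>2 * D ^ 4 + 3 * D\<^sup>2 + 1"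

lemma potential_le_lyapunov: "W \<subseteq> V \<Longrightarrow> potential W e \<le> lyapunov e"
  unfolding lyapunov_def using finite_V by (intro Max_ge) auto

lemma lyapunov_attained: obtains W where "W \<subseteq> V" "potential W e = lyapunov e"
proof -
  have "lyapunov e \<in> (\<lambda>W. potential W e) ` Pow V"
    unfolding lyapunov_def using finite_V by (intro Max_in) auto
  then show ?thesis
    using that by auto
qed

lemma norm_less_lyapunov: "norm e < lyapunov e"
  using potential_le_lyapunov[of "{}" e] by (simp add: potential_def closest_point_self)

lemma lyapunov_le: "lyapunov e \<le> norm e + A ^ card V"
proof -
  obtain W where W: "W \<subseteq> V" "potential W e = lyapunov e"
    by (rule lyapunov_attained)
  have "norm (closest_point (normal_cone V W) e) \<le> norm e"
    by (rule norm_closest_point_convex_cone_le[OF convex_cone_normal_cone closed_normal_cone])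
  moreover have "A ^ card W \<le> A ^ card V"
    using A_ge_1 by (intro power_increasing card_mono[OF finite_V W(1)])
  ultimately show ?thesis
    using W(2) by (simp add: potential_def)
qed

lemma dist_normal_cone_insert_le:
  assumes "v \<in> V" "W \<subseteq> V" and near: "\<forall>u\<in>V. inner e (u - v) \<le> (norm (u - v))\<^sup>2 / 2"
  shows "norm (e - closest_point (normal_cone V (insert v W)) e)
           \<le> C * (D * norm (e - closest_point (normal_cone V W) e) + D\<^sup>2)"
proof (rule hoffman)
  let ?p = "closest_point (normal_cone V W) e"
  let ?s = "norm (e - ?p)"
  show "insert v W \<subseteq> V" "0 \<le> D * ?s + D\<^sup>2"
    using assms D_pos by simp_all
  have "inner e (u - w) \<le> D * ?s + D\<^sup>2" if "u \<in> V" "w \<in> insert v W" for u w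
  proof (cases "w = v")
    case True
    have "inner e (u - w) \<le> (norm (u - v))\<^sup>2 / 2"
      using near \<open>u \<in> V\<close> True by simp
    also have "\<dots> \<le> D\<^sup>2"
      using power_mono[OF norm_diff_le_D[OF \<open>u \<in> V\<close> \<open>v \<in> V\<close>] norm_ge_zero, of 2] zero_le_power2[of D]
      by linarith
    finally show ?thesis
      using D_pos by (simp add: add_increasing)
  next
    case False
    then have "w \<in> W"
      using that by simp
    have "?p \<in> normal_cone V W"
      by (intro closest_point_in_convex_cone convex_cone_normal_cone closed_normal_cone)
    then have "inner ?p (u - w) \<le> 0"
      using \<open>u \<in> V\<close> \<open>w \<in> W\<close> by (simp add: mem_normal_cone inner_diff_right)
    moreover have "inner (e - ?p) (u - w) \<le> ?s * norm (u - w)"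
      by (rule norm_cauchy_schwarz)
    moreover have "?s * norm (u - w) \<le> ?s * D"
      using \<open>w \<in> W\<close> assms(2) by (intro mult_left_mono norm_diff_le_D[OF \<open>u \<in> V\<close>]) auto
    moreover have "inner e (u - w) = inner ?p (u - w) + inner (e - ?p) (u - w)"
      by (simp add: inner_diff_left)
    ultimately show ?thesis
      using zero_le_power2[of D] mult.commute[of D ?s] by linarith
  qed
  then show "\<forall>u\<in>V. \<forall>w\<in>insert v W. inner e (u - w) \<le> D * ?s + D\<^sup>2"
    by blast
qed

lemma lyapunov_attained_at_vertex:
  assumes "v \<in> V" and near: "\<forall>u\<in>V. inner e (u - v) \<le> (norm (u - v))\<^sup>2 / 2"
    and large: "critical_radius \<le> norm e"
  obtains W where "W \<subseteq> V" "v \<in> W" "potential W e = lyapunov e"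
proof -
  obtain W0 where W0: "W0 \<subseteq> V" "potential W0 e = lyapunov e"
    by (rule lyapunov_attained)
  show ?thesis
  proof (cases "v \<in> W0")
    case True
    then show ?thesis
      using W0 that by blast
  next
    case False
    define n where "n W = norm (closest_point (normal_cone V W) e)" for W
    define d where "d W = norm (e - closest_point (normal_cone V W) e)" for W
    define a where "a = A ^ card W0"
    have leg: "0 \<le> n W" "(n W)\<^sup>2 + (d W)\<^sup>2 = (norm e)\<^sup>2" "0 \<le> d W" for W
      unfolding n_def d_def
      by (simp_all add: norm_closest_point_convex_cone[OF convex_cone_normal_cone closed_normal_cone])
    have d_insert: "d (insert v W0) \<le> C * (D * d W0 + D\<^sup>2)"
      unfolding d_def by (rule dist_normal_cone_insert_le[OF \<open>v \<in> V\<close> W0(1) near])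
    have d_singleton: "d {v} \<le> C * D\<^sup>2"
      using dist_normal_cone_insert_le[OF \<open>v \<in> V\<close> empty_subsetI near]
      by (simp add: d_def closest_point_self)
    have "n W0 + a \<le> n (insert v W0) + a * A \<or> n W0 + a \<le> n {v} + A"
      using vertex_insertion_arith[OF C_pos D_pos A_large one_le_power[OF A_ge_1, of "card W0", folded a_def]
          large[unfolded critical_radius_def] leg(1,2) leg d_insert leg d_singleton] .
    moreover have "potential (insert v W0) e = n (insert v W0) + a * A"
      using False finite_subset[OF W0(1) finite_V] by (simp add: potential_def n_def a_def)
    moreover have "potential W0 e = n W0 + a" "potential {v} e = n {v} + A"
      by (simp_all add: potential_def n_def a_def)
    moreover have "insert v W0 \<subseteq> V" "{v} \<subseteq> V"
      using W0(1) \<open>v \<in> V\<close> by simp_all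
    note this [THEN potential_le_lyapunov, of e]
    ultimately consider "potential (insert v W0) e = lyapunov e" | "potential {v} e = lyapunov e"
      using W0(2) by linarith
    then show ?thesis
      using that \<open>insert v W0 \<subseteq> V\<close> \<open>{v} \<subseteq> V\<close> by (metis insertI1)
  qed
qed

lemma lyapunov_step:
  fixes x :: "'i \<Rightarrow> 'a" and w :: "'i \<Rightarrow> real"
  assumes v: "v \<in> V" "\<And>u. u \<in> V \<Longrightarrow> norm (y - v) \<le> norm (y - u)"
    and y: "y = (\<Sum>i\<in>I. w i *\<^sub>R x i) + \<gamma>" and \<gamma>: "\<gamma> \<in> convex hull V"
    and w: "\<And>i. i \<in> I \<Longrightarrow> 0 \<le> w i" "sum w I = 1"
    and L: "\<And>i. i \<in> I \<Longrightarrow> lyapunov (x i) \<le> L" "critical_radius + A ^ card V \<le> L"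
  shows "lyapunov (y - v) \<le> L"
proof (cases "norm (y - v) < critical_radius")
  case True
  then show ?thesis
    using lyapunov_le[of "y - v"] L(2) by linarith
next
  case False
  have "\<forall>u\<in>V. inner (y - v) (u - v) \<le> (norm (u - v))\<^sup>2 / 2"
    using nearest_point_inner_le v(2) by blast
  then obtain W where W: "W \<subseteq> V" "v \<in> W" "potential W (y - v) = lyapunov (y - v)"
    using lyapunov_attained_at_vertex[OF v(1)] False by (metis not_less)
  obtain q where q: "q \<in> normal_cone V W" "norm q \<le> 1"
    "inner (y - v) q = norm (closest_point (normal_cone V W) (y - v))"
    by (rule norm_closest_point_convex_cone_attained[OF convex_cone_normal_cone closed_normal_cone])
  have "convex hull V \<subseteq> {z. inner q z \<le> inner q v}"
    using q(1) W(2) by (intro hull_minimal) (auto simp: mem_normal_cone convex_halfspace_le)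
  then have "inner q \<gamma> \<le> inner q v"
    using \<gamma> by blast
  then have "inner (\<gamma> - v) q \<le> 0"
    by (simp add: inner_commute[of _ q] inner_diff_right)
  have each: "inner (x i) q + A ^ card W \<le> L" if "i \<in> I" for i
  proof -
    have "inner (x i) q + A ^ card W \<le> potential W (x i)"
      using inner_le_norm_closest_point_convex_cone[OF convex_cone_normal_cone closed_normal_cone q(1,2)]
      by (simp add: potential_def)
    also have "\<dots> \<le> L"
      using potential_le_lyapunov[OF W(1)] L(1)[OF that] by (rule order_trans)
    finally show ?thesis .
  qed
  have "lyapunov (y - v) = (\<Sum>i\<in>I. w i * inner (x i) q) + inner (\<gamma> - v) q + A ^ card W"
    using W(3) q(3) by (simp add: potential_def y inner_sum_left inner_diff_left inner_add_left)
  also have "\<dots> \<le> (\<Sum>i\<in>I. w i * (inner (x i) q + A ^ card W))"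
    using \<open>inner (\<gamma> - v) q \<le> 0\<close> w(2) by (simp add: distrib_left sum.distrib flip: sum_distrib_right)
  also have "\<dots> \<le> (\<Sum>i\<in>I. w i * L)"
    by (intro sum_mono mult_left_mono each w(1))
  also have "\<dots> = L"
    using w(2) by (simp flip: sum_distrib_right)
  finally show ?thesis .
qed

lemma lyapunov_bounded_along_scheme:
  fixes vtx :: "'a \<Rightarrow> 'a" and \<gamma> :: "nat \<Rightarrow> 'a" and w :: "nat \<Rightarrow> nat \<Rightarrow> real" and \<epsilon> :: "int \<Rightarrow> 'a"
  assumes vtx: "\<And>x. vtx x \<in> V" "\<And>x u. u \<in> V \<Longrightarrow> norm (x - vtx x) \<le> norm (x - u)"
    and \<gamma>: "\<And>k. 1 \<le> k \<Longrightarrow> \<gamma> k \<in> convex hull V"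
    and w: "\<And>k i. i \<in> {1..m} \<Longrightarrow> 0 \<le> w k i" "\<And>k. (\<Sum>i=1..m. w k i) = 1"
    and rec: "\<And>k::nat. \<epsilon> (int k + 1) =
       (\<Sum>i=1..m. w k i *\<^sub>R \<epsilon> (int k + 1 - int i)) + \<gamma> (k + 1)
       - vtx ((\<Sum>i=1..m. w k i *\<^sub>R \<epsilon> (int k + 1 - int i)) + \<gamma> (k + 1))"
    and init: "\<And>j. 1 - int m \<le> j \<Longrightarrow> j \<le> 0 \<Longrightarrow> lyapunov (\<epsilon> j) \<le> L"
    and L: "critical_radius + A ^ card V \<le> L"
    and k: "1 - int m \<le> k"
  shows "lyapunov (\<epsilon> k) \<le> L"
proof -
  have "\<forall>k. 1 - int m \<le> k \<longrightarrow> k \<le> int n \<longrightarrow> lyapunov (\<epsilon> k) \<le> L" for n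
  proof (induction n)
    case 0
    then show ?case
      using init by simp
  next
    case (Suc n)
    have step: "lyapunov (\<epsilon> (int n + 1)) \<le> L"
      unfolding rec[of n]
      by (rule lyapunov_step[where I = "{1..m}" and w = "w n" and x = "\<lambda>i. \<epsilon> (int n + 1 - int i)"])
        (use vtx \<gamma> w L Suc.IH in auto)
    show ?case
    proof (intro allI impI)
      fix k assume "1 - int m \<le> k" "k \<le> int (Suc n)"
      then consider "k \<le> int n" | "k = int n + 1"
        by linarith
      then show "lyapunov (\<epsilon> k) \<le> L"
        using Suc.IH \<open>1 - int m \<le> k\<close> step by cases auto
    qed
  qed
  then show ?thesis
    using k by (metis nat_le_iff order_refl)
qed

end

lemma vertex_potential_exists:
  fixes V :: "'a::euclidean_space set"
  assumes "finite V"
  obtains C D A where "vertex_potential V C D A"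
proof -
  obtain C where "0 < C" and hoffman:
    "\<And>W x F. W \<subseteq> V \<Longrightarrow> 0 \<le> F \<Longrightarrow> (\<forall>u\<in>V. \<forall>w\<in>W. inner x (u - w) \<le> F) \<Longrightarrow>
       norm (x - closest_point (normal_cone V W) x) \<le> C * F"
    using hoffman_bound_normal_cone[OF assms] by blast
  define D where "D = diameter V + 1"
  have "norm (u - u') \<le> D" if "u \<in> V" "u' \<in> V" for u u'
    using diameter_bounded_bound[OF finite_imp_bounded[OF assms] that] by (simp add: D_def dist_norm)
  moreover have "0 < D"
    using diameter_ge_0[OF finite_imp_bounded[OF assms]] by (simp add: D_def)
  ultimately have "vertex_potential V C D (1 + 4 * C\<^sup>2 * D\<^sup>2)"
    using assms \<open>0 < C\<close> hoffman by unfold_locales auto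
  then show ?thesis
    by (rule that)
qed

lemma polytope_extreme_points:
  fixes P :: "'a::euclidean_space set"
  assumes "polytope P"
  shows "finite {u. u extreme_point_of P}" "P = convex hull {u. u extreme_point_of P}"
  using finite_polyhedron_extreme_points[OF polytope_imp_polyhedron[OF assms]]
    Krein_Milman_Minkowski[OF polytope_imp_compact[OF assms] polytope_imp_convex[OF assms]]
  by simp_all

theorem corollary1p2:
  fixes P :: "'a::euclidean_space set"
    and vtx :: "'a \<Rightarrow> 'a"
    and m :: nat
    and \<gamma> :: "nat \<Rightarrow> 'a"
    and w :: "nat \<Rightarrow> nat \<Rightarrow> real"
    and \<epsilon> :: "int \<Rightarrow> 'a"
  assumes "polytope P"
    and vtx_in: "\<And>x. vtx x \<in> {u. u extreme_point_of P}"
    and vtx_closest: "\<And>x u. u extreme_point_of P \<Longrightarrow> norm (x - vtx x) \<le> norm (x - u)"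
    and "m \<ge> 1"
    and \<gamma>_in: "\<And>k. k \<ge> 1 \<Longrightarrow> \<gamma> k \<in> P"
    and w_nonneg: "\<And>k i. i \<in> {1..m} \<Longrightarrow> w k i \<ge> 0"
    and w_sum: "\<And>k. (\<Sum>i=1..m. w k i) = 1"
    and rec: "\<And>k::nat. \<epsilon> (int k + 1) =
       (\<Sum>i=1..m. w k i *\<^sub>R \<epsilon> (int k + 1 - int i)) + \<gamma> (k + 1)
       - vtx ((\<Sum>i=1..m. w k i *\<^sub>R \<epsilon> (int k + 1 - int i)) + \<gamma> (k + 1))"
  shows "\<exists>B>0. \<forall>k::int. k \<ge> 1 - int m \<longrightarrow> norm (\<epsilon> k) < B"
proof -
  define V where "V = {u. u extreme_point_of P}"
  have V: "finite V" "P = convex hull V"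
    using polytope_extreme_points[OF \<open>polytope P\<close>] by (simp_all add: V_def)
  obtain C D A where "vertex_potential V C D A"
    using vertex_potential_exists[OF V(1)] .
  then interpret vertex_potential V C D A .
  define L where "L = max (critical_radius + A ^ card V) (Max ((\<lambda>j. lyapunov (\<epsilon> j)) ` {1 - int m..0}))"
  have bound: "norm (\<epsilon> k) < L" if "1 - int m \<le> k" for k
  proof -
    have "lyapunov (\<epsilon> k) \<le> L"
    proof (rule lyapunov_bounded_along_scheme[where vtx = vtx and \<gamma> = \<gamma> and w = w and m = m])
      show "\<gamma> k \<in> convex hull V" if "1 \<le> k" for k
        using \<gamma>_in that V(2) by simp
      show "lyapunov (\<epsilon> j) \<le> L" if "1 - int m \<le> j" "j \<le> 0" for j
        unfolding L_def using that by (intro max.coboundedI2 Max_ge) auto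
    qed (use vtx_in vtx_closest w_nonneg w_sum rec that in \<open>simp_all add: V_def L_def\<close>)
    then show ?thesis
      using norm_less_lyapunov[of "\<epsilon> k"] by linarith
  qed
  moreover have "0 < L"
    using bound[of 0] \<open>m \<ge> 1\<close> norm_ge_zero[of "\<epsilon> 0"] by linarith
  ultimately show ?thesis
    by blast
qed

end
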